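(* Let $E$ be a nonzero real Banach space, let $\widetilde K$ be a nonempty $w(E^*,E)$-compact convex subset of $E^*$, and let $\tau_{\widetilde K}(x)=\max_{x^*\in\widetilde K}\langle x,x^*\rangle$ for $x\in E$. Then for all $(y^*,y^{**})\in E^*\times E^{**}$: $(y^*,y^{**})\in G\big((\partial\tau_{\widetilde K})^{\mathbb F}\big)$ if and only if $y^*\in\widetilde K$ and $\langle y^*,y^{**}\rangle=\sup_{x^*\in\widetilde K}\langle x^*,y^{**}\rangle$.
   Context: $E^*$, $E^{**}$ are dual and bidual with their pairings. For proper convex lsc $f$ on $E$, $x^*\in\partial f(x)$ iff $f(x)+f^*(x^* )=\langle x,x^*\rangle$ ($f^*$ the Fenchel conjugate); $\partial\tau_{\widetilde K}$ is closed, monotone and quasidense. For a multifunction $S\colon E\rightrightarrows E^*$ with nonempty graph $G(S)$: closed means $G(S)$ norm-closed; monotone means $\langle s-t,s^*-t^*\rangle\ge0$ on $G(S)$; quasidense means for every $(x,x^* )$, $\inf_{(s,s^* )\in G(S)}[\tfrac12\|s-x\|^2+\tfrac12\|s^*-x^*\|^2+\langle s-x,s^*-x^*\rangle]\le0$. Let $\varphi_S(x,x^* )=\sup_{(s,s^* )\in G(S)}[\langle s,x^*\rangle+\langle x,s^*\rangle-\langle s,s^*\rangle]$, and $\varphi_S^*$ its conjugate on $E^*\times E^{**}$ under the pairing $\langle (x,x^* ),(y^*,y^{**})\rangle=\langle x,y^*\rangle+\langle x^*,y^{**}\rangle$. For $S$ closed, monotone, quasidense, the Fitzpatrick extension $S^{\mathbb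 F}\colon E^*\rightrightarrows E^{**}$ is given by $(y^*,y^{**})\in G(S^{\mathbb F})$ iff $\varphi_S^*(y^*,y^{**})=\langle y^*,y^{**}\rangle$. *)

theory Defs
  imports "HOL-Analysis.Analysis"
begin

text \<open>Dual space E^* is modelled as the type of bounded linear functionals
  'a \<Rightarrow>L real; the bidual E^** as ('a \<Rightarrow>L real) \<Rightarrow>L real.\<close>

definition weak_star_topology :: "('a::real_normed_vector \<Rightarrow>\<^sub>L real) topology" where
  "weak_star_topology =
     topology_generated_by {{f. blinfun_apply f x \<in> U} | x U. open U}"

definition support_fun :: "('a::real_normed_vector \<Rightarrow>\<^sub>L real) set \<Rightarrow> 'a \<Rightarrow> real" where
  "support_fun K x = Sup ((\<lambda>k. blinfun_apply k x) ` K)"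

definition subdiff :: "('a::real_normed_vector \<Rightarrow> real) \<Rightarrow> 'a \<Rightarrow> ('a \<Rightarrow>\<^sub>L real) set" where
  "subdiff f x = {xs. \<forall>y. f y \<ge> f x + blinfun_apply xs (y - x)}"

definition subdiff_graph :: "('a::real_normed_vector \<Rightarrow> real) \<Rightarrow> ('a \<times> ('a \<Rightarrow>\<^sub>L real)) set" where
  "subdiff_graph f = {(x, xs). xs \<in> subdiff f x}"

definition fitzpatrick :: "('a::real_normed_vector \<times> ('a \<Rightarrow>\<^sub>L real)) set
    \<Rightarrow> 'a \<Rightarrow> ('a \<Rightarrow>\<^sub>L real) \<Rightarrow> ereal" where
  "fitzpatrick G x xs =
     (SUP p\<in>G. ereal (blinfun_apply xs (fst p) + blinfun_apply (snd p) x
                       - blinfun_apply (snd p) (fst p)))"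

definition fitzpatrick_conj :: "('a::real_normed_vector \<times> ('a \<Rightarrow>\<^sub>L real)) set
    \<Rightarrow> ('a \<Rightarrow>\<^sub>L real) \<Rightarrow> (('a \<Rightarrow>\<^sub>L real) \<Rightarrow>\<^sub>L real) \<Rightarrow> ereal" where
  "fitzpatrick_conj G ys yss =
     (SUP p\<in>UNIV. ereal (blinfun_apply ys (fst p) + blinfun_apply yss (snd p))
                  - fitzpatrick G (fst p) (snd p))"

definition fitzpatrick_ext_graph :: "('a::real_normed_vector \<times> ('a \<Rightarrow>\<^sub>L real)) set
    \<Rightarrow> (('a \<Rightarrow>\<^sub>L real) \<times> (('a \<Rightarrow>\<^sub>L real) \<Rightarrow>\<^sub>L real)) set" where
  "fitzpatrick_ext_graph G =
     {(ys, yss). fitzpatrick_conj G ys yss = ereal (blinfun_apply yss ys)}"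

end

theory Submission
  imports Defs
begin

text \<open>The subdifferential graph of \<open>\<tau>\<^sub>K\<close> consists of the pairs \<open>(s, k)\<close> with \<open>k \<in> K\<close> and
  \<open>k(s) = \<tau>\<^sub>K(s)\<close>. Hence the Fitzpatrick function is \<open>\<phi>(x, x\<^sup>*) = \<tau>\<^sub>K(x) + \<iota>\<^sub>K(x\<^sup>*)\<close>, and its
  conjugate is \<open>\<phi>\<^sup>*(y\<^sup>*, y\<^sup>*\<^sup>*) = \<iota>\<^sub>K(y\<^sup>*) + sup\<^sub>K y\<^sup>*\<^sup>*\<close>, because \<open>sup\<^sub>x (y\<^sup>*(x) - \<tau>\<^sub>K(x))\<close> is \<open>0\<close>
  or \<open>\<infinity>\<close> according as \<open>y\<^sup>* \<in> K\<close> or not. The one nontrivial ingredient is the bipolar fact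
  that a functional dominated by \<open>\<tau>\<^sub>K\<close> lies in \<open>K\<close>. For finitely many test points this follows
  from the first-order condition of a least-squares problem over \<open>K\<close>; weak-star compactness
  then passes to all points through the finite intersection property.\<close>

lemma topspace_weak_star_topology [simp]:
  "topspace (weak_star_topology :: ('a::real_normed_vector \<Rightarrow>\<^sub>L real) topology) = UNIV"
  unfolding weak_star_topology_def topology_generated_by_topspace
  by (auto intro!: exI[of _ UNIV])

lemma continuous_map_weak_star_eval [continuous_intros]:
  "continuous_map (weak_star_topology :: ('a::real_normed_vector \<Rightarrow>\<^sub>L real) topology)
     euclideanreal (\<lambda>k. blinfun_apply k x)"
  unfolding continuous_map_def
proof (intro conjI allI impI)
  fix U :: "real set"
  assume "openin euclideanreal U"
  then have "{f. blinfun_apply f x \<in> U} \<in> {{f. blinfun_apply f x \<in> U} | x U. open U}"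
    by auto
  then have "openin weak_star_topology {f::'a \<Rightarrow>\<^sub>L real. blinfun_apply f x \<in> U}"
    unfolding weak_star_topology_def by (rule topology_generated_by_Basis)
  then show "openin weak_star_topology {k \<in> topspace weak_star_topology. blinfun_apply k x \<in> U}"
    by simp
qed auto

lemma weak_star_compact_attains_inf:
  fixes K :: "('a::real_normed_vector \<Rightarrow>\<^sub>L real) set"
  assumes "compactin weak_star_topology K" "K \<noteq> {}"
    and "continuous_map weak_star_topology euclideanreal f"
  shows "\<exists>k0\<in>K. \<forall>k\<in>K. f k0 \<le> f k"
proof -
  have "compact (f ` K)"
    using image_compactin[OF assms(1,3)] by simp
  then show ?thesis
    using compact_attains_inf[of "f ` K"] assms(2) by auto
qed

lemma support_fun_eq_max:
  assumes "k0 \<in> K" "\<forall>k\<in>K. blinfun_apply k x \<le> blinfun_apply k0 x"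
  shows "support_fun K x = blinfun_apply k0 x"
  unfolding support_fun_def using assms by (intro cSup_eq_maximum) auto

lemma support_fun_attained:
  fixes K :: "('a::real_normed_vector \<Rightarrow>\<^sub>L real) set"
  assumes "compactin weak_star_topology K" "K \<noteq> {}"
  shows "\<exists>k0\<in>K. (\<forall>k\<in>K. blinfun_apply k x \<le> blinfun_apply k0 x)
                 \<and> support_fun K x = blinfun_apply k0 x"
proof -
  obtain k0 where "k0 \<in> K" "\<forall>k\<in>K. - blinfun_apply k0 x \<le> - blinfun_apply k x"
    using weak_star_compact_attains_inf[OF assms, of "\<lambda>k. - blinfun_apply k x"]
    by (auto intro: continuous_intros)
  then show ?thesis
    using support_fun_eq_max[of k0 K x] by auto
qed

lemma le_support_fun:
  fixes K :: "('a::real_normed_vector \<Rightarrow>\<^sub>L real) set"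
  assumes "compactin weak_star_topology K" "k \<in> K"
  shows "blinfun_apply k x \<le> support_fun K x"
  using support_fun_attained[OF assms(1), of x] assms(2) by (metis empty_iff)

lemma support_fun_zero:
  assumes "K \<noteq> {}"
  shows "support_fun K 0 = 0"
  using assms by (auto simp: support_fun_def image_constant_conv)

lemma support_fun_scaleR:
  fixes K :: "('a::real_normed_vector \<Rightarrow>\<^sub>L real) set"
  assumes "compactin weak_star_topology K" "K \<noteq> {}" "t \<ge> 0"
  shows "support_fun K (t *\<^sub>R x) = t * support_fun K x"
proof -
  obtain k0 where "k0 \<in> K" "\<forall>k\<in>K. blinfun_apply k x \<le> blinfun_apply k0 x"
    and \<tau>x: "support_fun K x = blinfun_apply k0 x"
    using support_fun_attained[OF assms(1,2)] by blast
  then have "support_fun K (t *\<^sub>R x) = blinfun_apply k0 (t *\<^sub>R x)"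
    using assms(3) by (intro support_fun_eq_max) (auto simp: blinfun.scaleR_right mult_left_mono)
  then show ?thesis
    using \<tau>x by (simp add: blinfun.scaleR_right)
qed

lemma nonneg_if_nonneg_perturbation:
  fixes a b :: real
  assumes "\<And>t. 0 < t \<Longrightarrow> t \<le> 1 \<Longrightarrow> 0 \<le> a + t * b"
  shows "0 \<le> a"
proof (rule ccontr)
  assume "\<not> 0 \<le> a"
  define t where "t = min 1 (- a / (2 * (\<bar>b\<bar> + 1)))"
  have t: "0 < t" "t \<le> 1"
    using \<open>\<not> 0 \<le> a\<close> by (auto simp: t_def divide_neg_pos)
  have "t * b \<le> t * \<bar>b\<bar>"
    using t by (simp add: mult_left_mono)
  also have "\<dots> \<le> (- a / (2 * (\<bar>b\<bar> + 1))) * (\<bar>b\<bar> + 1)"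
    using t by (intro mult_mono) (auto simp: t_def)
  also have "\<dots> = - a / 2"
    by (simp add: field_simps)
  finally show False
    using assms[OF t] \<open>\<not> 0 \<le> a\<close> by linarith
qed

lemma least_squares_variational_ineq:
  fixes K :: "('a::real_normed_vector \<Rightarrow>\<^sub>L real) set"
  assumes "convex K" "k0 \<in> K" "k \<in> K"
    and min: "\<And>k. k \<in> K \<Longrightarrow>
      (\<Sum>x\<in>F. (blinfun_apply k0 x - blinfun_apply y x)\<^sup>2) \<le> (\<Sum>x\<in>F. (blinfun_apply k x - blinfun_apply y x)\<^sup>2)"
  shows "0 \<le> (\<Sum>x\<in>F. (blinfun_apply k0 x - blinfun_apply y x) * (blinfun_apply k x - blinfun_apply k0 x))"
proof -
  define d where "d x = blinfun_apply k0 x - blinfun_apply y x" for x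
  define e where "e x = blinfun_apply k x - blinfun_apply k0 x" for x
  have "0 \<le> 2 * (\<Sum>x\<in>F. d x * e x) + t * (\<Sum>x\<in>F. (e x)\<^sup>2)" if t: "0 < t" "t \<le> 1" for t
  proof -
    define kt where "kt = (1 - t) *\<^sub>R k0 + t *\<^sub>R k"
    have "kt \<in> K"
      unfolding kt_def using assms(1-3) t by (intro convexD) auto
    have kt_dev: "blinfun_apply kt x - blinfun_apply y x = d x + t * e x" for x
      by (simp add: kt_def d_def e_def blinfun.add_left blinfun.scaleR_left) (simp add: algebra_simps)
    have "(\<Sum>x\<in>F. (d x)\<^sup>2) \<le> (\<Sum>x\<in>F. (blinfun_apply kt x - blinfun_apply y x)\<^sup>2)"
      unfolding d_def by (rule min[OF \<open>kt \<in> K\<close>])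
    also have "\<dots> = (\<Sum>x\<in>F. (d x + t * e x)\<^sup>2)"
      by (simp only: kt_dev)
    also have "\<dots> = (\<Sum>x\<in>F. (d x)\<^sup>2) + t * (2 * (\<Sum>x\<in>F. d x * e x) + t * (\<Sum>x\<in>F. (e x)\<^sup>2))"
      by (simp add: power2_sum sum.distrib sum_distrib_left algebra_simps power2_eq_square)
    finally show ?thesis
      using t by (simp add: zero_le_mult_iff)
  qed
  then have "0 \<le> 2 * (\<Sum>x\<in>F. d x * e x)"
    by (rule nonneg_if_nonneg_perturbation)
  then show ?thesis
    by (simp add: d_def e_def)
qed

lemma support_fun_dominated_agrees_on_finite:
  fixes K :: "('a::real_normed_vector \<Rightarrow>\<^sub>L real) set"
  assumes cpt: "compactin weak_star_topology K" and ne: "K \<noteq> {}" and cvx: "convex K"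
    and le: "\<And>x. blinfun_apply y x \<le> support_fun K x" and "finite F"
  shows "\<exists>k\<in>K. \<forall>x\<in>F. blinfun_apply k x = blinfun_apply y x"
proof -
  have "continuous_map weak_star_topology euclideanreal
          (\<lambda>k. \<Sum>x\<in>F. (blinfun_apply k x - blinfun_apply y x)\<^sup>2)"
    unfolding power2_eq_square using \<open>finite F\<close> by (intro continuous_intros) auto
  then obtain k0 where "k0 \<in> K" and min: "\<And>k. k \<in> K \<Longrightarrow>
      (\<Sum>x\<in>F. (blinfun_apply k0 x - blinfun_apply y x)\<^sup>2) \<le> (\<Sum>x\<in>F. (blinfun_apply k x - blinfun_apply y x)\<^sup>2)"
    using weak_star_compact_attains_inf[OF cpt ne] by blast
  define d where "d x = blinfun_apply k0 x - blinfun_apply y x" for x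
  \<comment> \<open>The least-squares minimizer \<open>k0\<close> maximizes \<open>K\<close> at \<open>-z\<close>, so \<open>y(-z) \<le> k0(-z)\<close> forces \<open>\<Sum> d\<^sup>2 \<le> 0\<close>.\<close>
  define z where "z = (\<Sum>x\<in>F. d x *\<^sub>R x)"
  have apply_z: "blinfun_apply k z = (\<Sum>x\<in>F. d x * blinfun_apply k x)" for k
    by (simp add: z_def blinfun.sum_right blinfun.scaleR_right)
  have "blinfun_apply k (- z) \<le> blinfun_apply k0 (- z)" if "k \<in> K" for k
    using least_squares_variational_ineq[OF cvx \<open>k0 \<in> K\<close> that min]
    by (simp add: blinfun.minus_right apply_z d_def sum_subtractf sum.distrib algebra_simps)
  then have "support_fun K (- z) = blinfun_apply k0 (- z)"
    using \<open>k0 \<in> K\<close> by (intro support_fun_eq_max) auto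
  then have "blinfun_apply y (- z) \<le> blinfun_apply k0 (- z)"
    using le by metis
  moreover have "blinfun_apply k0 z - blinfun_apply y z = (\<Sum>x\<in>F. (d x)\<^sup>2)"
    unfolding apply_z sum_subtractf[symmetric]
    by (intro sum.cong) (simp_all add: d_def power2_eq_square algebra_simps)
  ultimately have "(\<Sum>x\<in>F. (d x)\<^sup>2) \<le> 0"
    by (simp add: blinfun.minus_right)
  then have "(\<Sum>x\<in>F. (d x)\<^sup>2) = 0"
    by (simp add: antisym sum_nonneg)
  then have "\<forall>x\<in>F. d x = 0"
    using sum_nonneg_eq_0_iff[OF \<open>finite F\<close>, of "\<lambda>x. (d x)\<^sup>2"] by simp
  then show ?thesis
    using \<open>k0 \<in> K\<close> by (auto simp: d_def)
qed

lemma mem_if_le_support_fun: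
  fixes K :: "('a::real_normed_vector \<Rightarrow>\<^sub>L real) set"
  assumes cpt: "compactin weak_star_topology K" and ne: "K \<noteq> {}" and cvx: "convex K"
    and le: "\<And>x. blinfun_apply y x \<le> support_fun K x"
  shows "y \<in> K"
proof -
  define A where "A x = {k. blinfun_apply k x = blinfun_apply y x}" for x
  have "closedin weak_star_topology (A x)" for x
    using closedin_continuous_map_preimage[OF continuous_map_weak_star_eval[of x],
        of "{blinfun_apply y x}"]
    by (simp add: A_def)
  moreover have "K \<inter> \<Inter>\<F> \<noteq> {}" if \<F>: "finite \<F>" "\<F> \<subseteq> range A" for \<F>
  proof -
    obtain F where "finite F" "\<F> = A ` F"
      using finite_subset_image[OF \<F>] by blast
    then show ?thesis
      using support_fun_dominated_agrees_on_finite[OF cpt ne cvx le] by (fastforce simp: A_def)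
  qed
  ultimately have "K \<inter> \<Inter>(range A) \<noteq> {}"
    using cpt[unfolded compactin_fip] by blast
  then obtain k where "k \<in> K" "\<And>x. blinfun_apply k x = blinfun_apply y x"
    by (auto simp: A_def)
  moreover from this(2) have "k = y"
    by (intro blinfun_eqI) auto
  ultimately show ?thesis
    by simp
qed

lemma subdiff_graph_support_fun_iff:
  fixes K :: "('a::real_normed_vector \<Rightarrow>\<^sub>L real) set"
  assumes cpt: "compactin weak_star_topology K" and ne: "K \<noteq> {}" and cvx: "convex K"
  shows "(s, k) \<in> subdiff_graph (support_fun K) \<longleftrightarrow> k \<in> K \<and> blinfun_apply k s = support_fun K s"
proof
  assume "(s, k) \<in> subdiff_graph (support_fun K)"
  then have sub: "\<And>y. support_fun K s + blinfun_apply k (y - s) \<le> support_fun K y"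
    by (auto simp: subdiff_graph_def subdiff_def)
  have "support_fun K s \<le> blinfun_apply k s"
    using sub[of 0] support_fun_zero[OF ne] by (simp add: blinfun.minus_right)
  moreover have "blinfun_apply k s \<le> support_fun K s"
    using sub[of "2 *\<^sub>R s"] support_fun_scaleR[OF cpt ne, of 2 s]
    by (simp add: blinfun.diff_right blinfun.scaleR_right)
  ultimately have eq: "blinfun_apply k s = support_fun K s"
    by linarith
  moreover have "k \<in> K"
    using sub eq by (intro mem_if_le_support_fun[OF cpt ne cvx]) (simp add: blinfun.diff_right)
  ultimately show "k \<in> K \<and> blinfun_apply k s = support_fun K s"
    by blast
next
  assume "k \<in> K \<and> blinfun_apply k s = support_fun K s"
  then show "(s, k) \<in> subdiff_graph (support_fun K)"
    using le_support_fun[OF cpt]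
    by (auto simp: subdiff_graph_def subdiff_def blinfun.diff_right)
qed

lemma support_fun_gap_unbounded:
  fixes K :: "('a::real_normed_vector \<Rightarrow>\<^sub>L real) set"
  assumes cpt: "compactin weak_star_topology K" and ne: "K \<noteq> {}" and cvx: "convex K"
    and "y \<notin> K"
  shows "\<exists>s. r \<le> blinfun_apply y s - support_fun K s"
proof -
  obtain s where s: "support_fun K s < blinfun_apply y s"
    using mem_if_le_support_fun[OF cpt ne cvx] \<open>y \<notin> K\<close> by (meson not_le)
  define t where "t = \<bar>r\<bar> / (blinfun_apply y s - support_fun K s)"
  have "t \<ge> 0"
    using s by (simp add: t_def)
  then have "blinfun_apply y (t *\<^sub>R s) - support_fun K (t *\<^sub>R s)
             = t * (blinfun_apply y s - support_fun K s)"
    by (simp add: support_fun_scaleR[OF cpt ne] blinfun.scaleR_right algebra_simps)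
  also have "\<dots> = \<bar>r\<bar>"
    using s by (simp add: t_def)
  finally show ?thesis
    by (metis abs_ge_self)
qed

lemma fitzpatrick_subdiff_support_fun:
  fixes K :: "('a::real_normed_vector \<Rightarrow>\<^sub>L real) set"
  assumes cpt: "compactin weak_star_topology K" and ne: "K \<noteq> {}" and cvx: "convex K"
  shows "fitzpatrick (subdiff_graph (support_fun K)) x xs
           = (if xs \<in> K then ereal (support_fun K x) else \<infinity>)"
proof (cases "xs \<in> K")
  case True
  have "blinfun_apply xs s + blinfun_apply k x - support_fun K s \<le> support_fun K x"
    if "k \<in> K" for s k
    using le_support_fun[OF cpt True, of s] le_support_fun[OF cpt that, of x] by linarith
  then have "fitzpatrick (subdiff_graph (support_fun K)) x xs \<le> ereal (support_fun K x)"
    unfolding fitzpatrick_def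
    by (intro SUP_least) (auto simp: subdiff_graph_support_fun_iff[OF cpt ne cvx])
  moreover obtain k0 where "k0 \<in> K" "support_fun K x = blinfun_apply k0 x"
    using support_fun_attained[OF cpt ne] by blast
  then have "ereal (support_fun K x) \<le> fitzpatrick (subdiff_graph (support_fun K)) x xs"
    unfolding fitzpatrick_def
    by (intro SUP_upper2[of "(0, k0)"])
      (auto simp: subdiff_graph_support_fun_iff[OF cpt ne cvx] support_fun_zero[OF ne])
  ultimately show ?thesis
    using True by simp
next
  case False
  obtain m where m: "\<And>k. k \<in> K \<Longrightarrow> m \<le> blinfun_apply k x"
    using weak_star_compact_attains_inf[OF cpt ne continuous_map_weak_star_eval] by blast
  have "ereal r \<le> fitzpatrick (subdiff_graph (support_fun K)) x xs" for r
  proof -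
    obtain s where s: "r - m \<le> blinfun_apply xs s - support_fun K s"
      using support_fun_gap_unbounded[OF cpt ne cvx False] by blast
    obtain k where k: "k \<in> K" "support_fun K s = blinfun_apply k s"
      using support_fun_attained[OF cpt ne] by blast
    then have "r \<le> blinfun_apply xs s + blinfun_apply k x - blinfun_apply k s"
      using s m[OF k(1)] by linarith
    with k show ?thesis
      unfolding fitzpatrick_def
      by (intro SUP_upper2[of "(s, k)"]) (auto simp: subdiff_graph_support_fun_iff[OF cpt ne cvx])
  qed
  then show ?thesis
    using False by (simp add: ereal_top)
qed

lemma fitzpatrick_conj_subdiff_support_fun:
  fixes K :: "('a::real_normed_vector \<Rightarrow>\<^sub>L real) set"
  assumes cpt: "compactin weak_star_topology K" and ne: "K \<noteq> {}" and cvx: "convex K"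
  shows "fitzpatrick_conj (subdiff_graph (support_fun K)) ys yss
           = (if ys \<in> K then (SUP xs\<in>K. ereal (blinfun_apply yss xs)) else \<infinity>)"
proof (cases "ys \<in> K")
  case True
  have "fitzpatrick_conj (subdiff_graph (support_fun K)) ys yss
          \<le> (SUP xs\<in>K. ereal (blinfun_apply yss xs))"
    unfolding fitzpatrick_conj_def fitzpatrick_subdiff_support_fun[OF assms]
    using le_support_fun[OF cpt True]
    by (intro SUP_least) (force intro: SUP_upper2)
  moreover have "(SUP xs\<in>K. ereal (blinfun_apply yss xs))
          \<le> fitzpatrick_conj (subdiff_graph (support_fun K)) ys yss"
    unfolding fitzpatrick_conj_def fitzpatrick_subdiff_support_fun[OF assms]
    by (intro SUP_least SUP_upper2[of "(0, _)"]) (auto simp: support_fun_zero[OF ne])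
  ultimately show ?thesis
    using True by simp
next
  case False
  obtain k where "k \<in> K"
    using ne by blast
  have "ereal r \<le> fitzpatrick_conj (subdiff_graph (support_fun K)) ys yss" for r
  proof -
    obtain s where "r - blinfun_apply yss k \<le> blinfun_apply ys s - support_fun K s"
      using support_fun_gap_unbounded[OF cpt ne cvx False] by blast
    with \<open>k \<in> K\<close> show ?thesis
      unfolding fitzpatrick_conj_def fitzpatrick_subdiff_support_fun[OF assms]
      by (intro SUP_upper2[of "(s, k)"]) auto
  qed
  then show ?thesis
    using False by (simp add: ereal_top)
qed

theorem theorem3p8:
  fixes K :: "('a::banach \<Rightarrow>\<^sub>L real) set"
    and ys :: "'a \<Rightarrow>\<^sub>L real"
    and yss :: "('a \<Rightarrow>\<^sub>L real) \<Rightarrow>\<^sub>L real"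
  assumes "\<exists>x::'a. x \<noteq> 0"
    and "K \<noteq> {}"
    and "compactin weak_star_topology K"
    and "convex K"
  shows "(ys, yss) \<in> fitzpatrick_ext_graph (subdiff_graph (support_fun K))
     \<longleftrightarrow> ys \<in> K \<and> ereal (blinfun_apply yss ys) = (SUP xs\<in>K. ereal (blinfun_apply yss xs))"
  using fitzpatrick_conj_subdiff_support_fun[OF assms(3,2,4), of ys yss]
  by (auto simp: fitzpatrick_ext_graph_def)

end
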